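(* Let $\mathcal{H}$ be a hierarchical generator, $\varphi\in\mathcal{H}$, $k\ge0$, and $\psi\in\mathrm{ch}^k(\varphi)\cap\mathcal{H}$. Then $k\le\mathrm{gap}_{\mathcal{H}}(\psi)\le\mathrm{gap}_{\mathcal{H}}(\varphi)+k$.
   Context: Fix integers $d\ge1$, $n\ge2$, $m\ge2$; $s=n-1$, $p=m-1$. B-splines $\varphi^\ell_{\vec i}(\vec x)=\prod_kQ(n^\ell x_k-i_k)$ for $\ell\ge0$, $\vec i\in\mathbb{Z}^d$, $Q$ the uniform B-spline of order $m$ with knots $0,\dots,m$; $\mathfrak{B}$ the set of all of them; $\mathcal{B}^0=\{\varphi^0_{\vec i}:\vec i\in[-p:0]^d\}$. Children $\mathrm{ch}(\varphi^\ell_{\vec i})=\{\varphi^{\ell+1}_{\vec k}:n\vec i\le\vec k\le n\vec i+sm\}$, extended to sets by union, $\mathrm{ch}^k$ iterated. Cells $I^\ell_{\vec i}=\prod_k[i_kn^{-\ell},(i_k+1)n^{-\ell})$, cell children $\mathrm{ch}(I^\ell_{\vec i})=\{I^{\ell+1}_{\vec k}:n\vec i\le\vec k\le n\vec i+s\}$, $\mathrm{ch}^k$ iterated, $\mathrm{ch}^{-k}(I)=\{J:I\in\mathrm{ch}^k(J)\}$. $\mathbb{I}(\varphi^\ell_{\vec i})=\{I^\ell_{\vec k}:\vec i\le\vec k\le\vec i+p\}$, $\mathbb{I}^k(\varphi)=\mathrm{ch}^k(\mathbb{I}(\varphi))$ ($k\in\mathbb{Z}$), $\mathbb{B}^k(I)=\{\varphi\in\mathfrak{B}:I\in\mathbb{I}^{-k}(\varphi)\}$,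 extended to sets by union; $\mathcal{O}(\varphi,j,\mathcal{H})=\mathbb{B}^j(\mathbb{I}(\varphi))\cap\mathcal{H}$. A lineage is a finite $\mathcal{L}\subset\mathfrak{B}$ with $\mathcal{L}\subset\mathcal{B}^0\cup\mathrm{ch}(\mathcal{L})$; its hierarchical generator is $(\mathcal{B}^0\cup\mathrm{ch}(\mathcal{L}))\setminus\mathcal{L}$. For $\varphi\in\mathcal{H}$, $\mathrm{gap}_{\mathcal{H}}(\varphi)=\sup\{g\in\mathbb{Z}:\mathcal{O}(\varphi,-g,\mathcal{H})\neq\emptyset\}$. *)

theory Defs
  imports Main
begin

text \<open>Tensor-product B-splines and cells, represented by (level, multi-index).
 The dimension d is the cardinality of the finite index type 'd.
 Parameters: n (refinement factor), m (spline order); s = n-1, p = m-1.\<close>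

datatype 'd bspline = BS nat "'d \<Rightarrow> int"
datatype 'd cell = Cell nat "'d \<Rightarrow> int"

definition B0 :: "nat \<Rightarrow> 'd bspline set" where
  "B0 m = {BS 0 i | i. \<forall>c. - (int m - 1) \<le> i c \<and> i c \<le> 0}"

fun chB :: "nat \<Rightarrow> nat \<Rightarrow> 'd bspline \<Rightarrow> 'd bspline set" where
  "chB n m (BS l i) = {BS (Suc l) k | k. \<forall>c. int n * i c \<le> k c \<and> k c \<le> int n * i c + (int n - 1) * int m}"

definition chBset :: "nat \<Rightarrow> nat \<Rightarrow> 'd bspline set \<Rightarrow> 'd bspline set" where
  "chBset n m S = (\<Union>f\<in>S. chB n m f)"

definition chB_pow :: "nat \<Rightarrow> nat \<Rightarrow> nat \<Rightarrow> 'd bspline set \<Rightarrow> 'd bspline set" where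
  "chB_pow n m k = (chBset n m ^^ k)"

fun chC :: "nat \<Rightarrow> 'd cell \<Rightarrow> 'd cell set" where
  "chC n (Cell l i) = {Cell (Suc l) k | k. \<forall>c. int n * i c \<le> k c \<and> k c \<le> int n * i c + (int n - 1)}"

definition chCset :: "nat \<Rightarrow> 'd cell set \<Rightarrow> 'd cell set" where
  "chCset n S = (\<Union>I\<in>S. chC n I)"

definition chC_pow :: "nat \<Rightarrow> nat \<Rightarrow> 'd cell set \<Rightarrow> 'd cell set" where
  "chC_pow n k = (chCset n ^^ k)"

definition chC_neg :: "nat \<Rightarrow> nat \<Rightarrow> 'd cell set \<Rightarrow> 'd cell set" where
  "chC_neg n k S = {J. \<exists>I\<in>S. I \<in> chC_pow n k {J}}"

definition chC_int :: "nat \<Rightarrow> int \<Rightarrow> 'd cell set \<Rightarrow> 'd cell set" where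
  "chC_int n k S = (if 0 \<le> k then chC_pow n (nat k) S else chC_neg n (nat (- k)) S)"

fun suppI :: "nat \<Rightarrow> 'd bspline \<Rightarrow> 'd cell set" where
  "suppI m (BS l i) = {Cell l k | k. \<forall>c. i c \<le> k c \<and> k c \<le> i c + (int m - 1)}"

definition IIk :: "nat \<Rightarrow> nat \<Rightarrow> int \<Rightarrow> 'd bspline \<Rightarrow> 'd cell set" where
  "IIk n m k \<phi> = chC_int n k (suppI m \<phi>)"

definition BBk :: "nat \<Rightarrow> nat \<Rightarrow> int \<Rightarrow> 'd cell \<Rightarrow> 'd bspline set" where
  "BBk n m k I = {\<phi>. I \<in> IIk n m (- k) \<phi>}"

definition BBset :: "nat \<Rightarrow> nat \<Rightarrow> int \<Rightarrow> 'd cell set \<Rightarrow> 'd bspline set" where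
  "BBset n m k S = (\<Union>I\<in>S. BBk n m k I)"

definition Ov :: "nat \<Rightarrow> nat \<Rightarrow> 'd bspline \<Rightarrow> int \<Rightarrow> 'd bspline set \<Rightarrow> 'd bspline set" where
  "Ov n m \<phi> j H = BBset n m j (suppI m \<phi>) \<inter> H"

definition lineage :: "nat \<Rightarrow> nat \<Rightarrow> 'd bspline set \<Rightarrow> bool" where
  "lineage n m L \<longleftrightarrow> finite L \<and> L \<subseteq> B0 m \<union> chBset n m L"

definition hier_generator :: "nat \<Rightarrow> nat \<Rightarrow> 'd bspline set \<Rightarrow> bool" where
  "hier_generator n m H \<longleftrightarrow> (\<exists>L. lineage n m L \<and> H = (B0 m \<union> chBset n m L) - L)"

definition gap :: "nat \<Rightarrow> nat \<Rightarrow> 'd bspline set \<Rightarrow> 'd bspline \<Rightarrow> int" where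
  "gap n m H \<phi> = Sup {g::int. Ov n m \<phi> (- g) H \<noteq> {}}"

end

theory Submission imports Defs begin

text \<open>Descending one level maps a cell index \<open>q\<close> to its parent index \<open>q div n\<close>, so a
 k-fold descendant of a cell is recognised by its level and by \<open>q div n^k\<close>. Every support
 cell of \<open>\<psi> \<in> ch^k(\<phi>)\<close> is a k-fold descendant of a support cell of \<open>\<phi>\<close>. Hence an overlap
 of \<open>\<psi>\<close> with some \<open>\<psi>' \<in> \<H>\<close> at level offset \<open>g\<close> yields an overlap of \<open>\<phi>\<close> with \<open>\<psi>'\<close> at
 offset \<open>g - k\<close>, giving the upper bound, while \<open>\<psi>\<close> overlapping \<open>\<phi> \<in> \<H>\<close> at offset \<open>k\<close>
 gives the lower bound.\<close>

lemma int_div_eq_iff_bounds: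
  fixes n a b :: int
  assumes "n > 0"
  shows "b div n = a \<longleftrightarrow> n * a \<le> b \<and> b \<le> n * a + (n - 1)"
proof
  have "b = n * (b div n) + b mod n" "0 \<le> b mod n" "b mod n < n"
    using assms by auto
  then have "n * (b div n) \<le> b \<and> b \<le> n * (b div n) + (n - 1)" by linarith
  then show "b div n = a \<Longrightarrow> n * a \<le> b \<and> b \<le> n * a + (n - 1)" by simp
next
  assume "n * a \<le> b \<and> b \<le> n * a + (n - 1)"
  then show "b div n = a"
    using assms by (intro int_div_pos_eq[where r = "b - n * a"]) (auto simp: algebra_simps)
qed

lemma div_power_add: "(x::int) div int n ^ (a + b) = x div int n ^ a div int n ^ b"
  by (simp add: power_add zdiv_zmult2_eq)

fun cell_level :: "'d cell \<Rightarrow> nat" where "cell_level (Cell l i) = l"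
fun cell_index :: "'d cell \<Rightarrow> 'd \<Rightarrow> int" where "cell_index (Cell l i) = i"

lemma cell_eq_iff: "I = J \<longleftrightarrow> cell_level I = cell_level J \<and> cell_index I = cell_index J"
  by (cases I; cases J) auto

definition descendant :: "nat \<Rightarrow> nat \<Rightarrow> 'd cell \<Rightarrow> 'd cell \<Rightarrow> bool" where
  "descendant n j J I \<longleftrightarrow>
     cell_level I = cell_level J + j \<and> (\<forall>c. cell_index I c div int n ^ j = cell_index J c)"

definition signed_descendant :: "nat \<Rightarrow> int \<Rightarrow> 'd cell \<Rightarrow> 'd cell \<Rightarrow> bool" where
  "signed_descendant n g J I \<longleftrightarrow>
     (0 \<le> g \<and> descendant n (nat g) J I) \<or> (g < 0 \<and> descendant n (nat (- g)) I J)"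

lemma descendant_trans: "descendant n a J K \<Longrightarrow> descendant n b K I \<Longrightarrow> descendant n (a + b) J I"
  unfolding descendant_def by (auto simp: div_power_add[of _ _ b a, unfolded add.commute[of b a]])

lemma descendant_cancel:
  assumes "descendant n a J I" "descendant n b K I" "b \<le> a"
  shows "descendant n (a - b) J K"
proof -
  obtain d where "a = b + d" using assms(3) le_Suc_ex by blast
  then show ?thesis using assms unfolding descendant_def by (auto simp: div_power_add)
qed

lemma signed_descendant_shift:
  assumes "signed_descendant n g J I" "descendant n k I' I"
  shows "signed_descendant n (g - int k) J I'"
proof (cases "0 \<le> g")
  case nonneg: True
  show ?thesis
  proof (cases "int k \<le> g")
    case True
    then have "descendant n (nat g - k) J I'"
      using assms nonneg descendant_cancel[of n "nat g" J I k I'] by (auto simp: signed_descendant_def)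
    with True show ?thesis by (simp add: signed_descendant_def nat_diff_distrib)
  next
    case False
    then have "descendant n (k - nat g) I' J"
      using assms nonneg descendant_cancel[OF assms(2), of "nat g" J]
      by (auto simp: signed_descendant_def)
    with False nonneg show ?thesis by (simp add: signed_descendant_def nat_diff_distrib)
  qed
next
  case False
  then have "descendant n (k + nat (- g)) I' J"
    using assms descendant_trans[OF assms(2)] by (auto simp: signed_descendant_def)
  moreover have "k + nat (- g) = nat (- (g - int k))" using False by simp
  ultimately show ?thesis using False by (simp add: signed_descendant_def)
qed

lemma mem_chC_iff_descendant: "n > 0 \<Longrightarrow> I \<in> chC n J \<longleftrightarrow> descendant n 1 J I"
  by (cases J; cases I) (auto simp: descendant_def int_div_eq_iff_bounds)

lemma chC_pow_eq_UN_singletons: "chC_pow n j S = (\<Union>J\<in>S. chC_pow n j {J})"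
proof (induction j)
  case 0
  then show ?case by (simp add: chC_pow_def)
next
  case (Suc j)
  then show ?case by (auto simp: chC_pow_def chCset_def)
qed

lemma mem_chC_pow_singleton_iff: "n > 0 \<Longrightarrow> I \<in> chC_pow n j {J} \<longleftrightarrow> descendant n j J I"
proof (induction j arbitrary: I)
  case 0
  then show ?case by (auto simp: chC_pow_def descendant_def cell_eq_iff)
next
  case (Suc j)
  have "I \<in> chC_pow n (Suc j) {J} \<longleftrightarrow> (\<exists>K. descendant n j J K \<and> descendant n 1 K I)"
    using Suc mem_chC_iff_descendant[OF Suc.prems] by (auto simp: chC_pow_def chCset_def)
  also have "\<dots> \<longleftrightarrow> descendant n (Suc j) J I"
  proof
    assume "\<exists>K. descendant n j J K \<and> descendant n 1 K I"
    then show "descendant n (Suc j) J I" using descendant_trans by fastforce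
  next
    assume desc: "descendant n (Suc j) J I"
    define K where "K = Cell (cell_level I - 1) (\<lambda>c. cell_index I c div int n)"
    have "descendant n 1 K I" using desc unfolding K_def descendant_def by auto
    then show "\<exists>K. descendant n j J K \<and> descendant n 1 K I"
      using descendant_cancel[OF desc, of 1 K] by auto
  qed
  finally show ?case .
qed

lemma mem_chC_int_iff: "n > 0 \<Longrightarrow> I \<in> chC_int n g S \<longleftrightarrow> (\<exists>J\<in>S. signed_descendant n g J I)"
  unfolding chC_int_def chC_neg_def signed_descendant_def
  by (subst chC_pow_eq_UN_singletons) (auto simp: mem_chC_pow_singleton_iff)

lemma suppI_nonempty: "m \<ge> 1 \<Longrightarrow> suppI m \<psi> \<noteq> {}"
  by (cases \<psi>) auto

lemma suppI_chB_parent: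
  assumes n: "n > 0" and "\<psi> \<in> chB n m (BS l i)" "I \<in> suppI m \<psi>"
  shows "\<exists>I'\<in>suppI m (BS l i). descendant n 1 I' I"
proof -
  obtain k where \<psi>: "\<psi> = BS (Suc l) k"
    and k: "\<forall>c. int n * i c \<le> k c \<and> k c \<le> int n * i c + (int n - 1) * int m"
    using assms(2) by auto
  obtain q where I: "I = Cell (Suc l) q" and q: "\<forall>c. k c \<le> q c \<and> q c \<le> k c + (int m - 1)"
    using assms(3) \<psi> by auto
  have lower: "i c \<le> q c div int n" for c
  proof -
    have "int n * i c \<le> q c" using k q by (meson order_trans)
    then have "(int n * i c) div int n \<le> q c div int n" by (rule zdiv_mono1) (use n in simp)
    then show ?thesis using n by simp
  qed
  have upper: "q c div int n \<le> i c + (int m - 1)" for c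
  proof -
    have "q c \<le> int n * i c + (int n - 1) * int m + (int m - 1)"
      using k q by (meson add_mono order_trans order_refl)
    then have "q c \<le> int n * (i c + int m) - 1"
      by (simp add: algebra_simps)
    then have "q c div int n \<le> (int n * (i c + int m) - 1) div int n"
      by (rule zdiv_mono1) (use n in simp)
    also have "\<dots> = i c + (int m - 1)"
      using n by (subst int_div_eq_iff_bounds) (auto simp: algebra_simps)
    finally show ?thesis .
  qed
  show ?thesis
    using lower upper by (intro bexI[of _ "Cell l (\<lambda>c. q c div int n)"]) (auto simp: I descendant_def)
qed

lemma suppI_chB_pow_ancestor:
  assumes n: "n > 0" and "\<psi> \<in> chB_pow n m k {\<phi>}" "I \<in> suppI m \<psi>"
  shows "\<exists>I'\<in>suppI m \<phi>. descendant n k I' I"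
  using assms(2,3)
proof (induction k arbitrary: \<psi> I)
  case 0
  then show ?case by (auto simp: chB_pow_def descendant_def)
next
  case (Suc k)
  then obtain \<chi> where \<chi>: "\<chi> \<in> chB_pow n m k {\<phi>}" "\<psi> \<in> chB n m \<chi>"
    by (auto simp: chB_pow_def chBset_def)
  obtain I'' where "I'' \<in> suppI m \<chi>" "descendant n 1 I'' I"
    using suppI_chB_parent[OF n] \<chi>(2) Suc.prems(2) by (cases \<chi>) blast
  moreover obtain I' where "I' \<in> suppI m \<phi>" "descendant n k I' I''"
    using Suc.IH[OF \<chi>(1) \<open>I'' \<in> _\<close>] by auto
  ultimately show ?case using descendant_trans by fastforce
qed

definition gap_offsets :: "nat \<Rightarrow> nat \<Rightarrow> 'd bspline set \<Rightarrow> 'd bspline \<Rightarrow> int set" where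
  "gap_offsets n m H \<phi> = {g. Ov n m \<phi> (- g) H \<noteq> {}}"

lemma gap_eq_Sup_gap_offsets: "gap n m H \<phi> = Sup (gap_offsets n m H \<phi>)"
  unfolding gap_def gap_offsets_def ..

lemma mem_gap_offsets_iff:
  "n > 0 \<Longrightarrow> g \<in> gap_offsets n m H \<phi> \<longleftrightarrow>
     (\<exists>\<psi>'\<in>H. \<exists>I\<in>suppI m \<phi>. \<exists>J\<in>suppI m \<psi>'. signed_descendant n g J I)"
  unfolding gap_offsets_def Ov_def BBset_def BBk_def IIk_def by (auto simp: mem_chC_int_iff)

lemma bdd_above_gap_offsets:
  assumes "n > 0" shows "bdd_above (gap_offsets n m H \<phi>)"
proof (cases \<phi>)
  case (BS l i)
  have "g \<le> int l" if g: "g \<in> gap_offsets n m H \<phi>" for g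
  proof -
    obtain I J where "I \<in> suppI m (BS l i)" "signed_descendant n g J I"
      using g unfolding mem_gap_offsets_iff[OF assms] BS by blast
    then show ?thesis unfolding signed_descendant_def descendant_def by auto
  qed
  then show ?thesis by (rule bdd_aboveI)
qed

lemma gap_offsets_chB_pow_shift:
  assumes "n > 0" "\<psi> \<in> chB_pow n m k {\<phi>}" "g \<in> gap_offsets n m H \<psi>"
  shows "g - int k \<in> gap_offsets n m H \<phi>"
proof -
  obtain \<psi>' I J where \<psi>': "\<psi>' \<in> H" and I: "I \<in> suppI m \<psi>" and J: "J \<in> suppI m \<psi>'"
    and JI: "signed_descendant n g J I"
    using assms(3) mem_gap_offsets_iff[OF assms(1)] by blast
  obtain I' where I': "I' \<in> suppI m \<phi>" and I'I: "descendant n k I' I"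
    using suppI_chB_pow_ancestor[OF assms(1,2) I] by blast
  have "signed_descendant n (g - int k) J I'"
    using JI I'I by (rule signed_descendant_shift)
  with \<psi>' I' J show ?thesis
    unfolding mem_gap_offsets_iff[OF assms(1)] by blast
qed

lemma chB_pow_mem_gap_offsets:
  assumes "n > 0" "m \<ge> 1" "\<phi> \<in> H" "\<psi> \<in> chB_pow n m k {\<phi>}"
  shows "int k \<in> gap_offsets n m H \<psi>"
proof -
  obtain I where I: "I \<in> suppI m \<psi>" using suppI_nonempty[OF assms(2)] by blast
  then obtain I' where I': "I' \<in> suppI m \<phi>" and I'I: "descendant n k I' I"
    using suppI_chB_pow_ancestor[OF assms(1,4)] by blast
  have "signed_descendant n (int k) I' I"
    using I'I by (simp add: signed_descendant_def)
  with assms(3) I I' show ?thesis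
    unfolding mem_gap_offsets_iff[OF assms(1)] by blast
qed

theorem lemma7p3:
  fixes n m :: nat and H :: "'d::finite bspline set" and \<phi> \<psi> :: "'d bspline" and k :: nat
  assumes "n \<ge> 2" and "m \<ge> 2"
    and "hier_generator n m H"
    and "\<phi> \<in> H"
    and "\<psi> \<in> chB_pow n m k {\<phi>} \<inter> H"
  shows "int k \<le> gap n m H \<psi> \<and> gap n m H \<psi> \<le> gap n m H \<phi> + int k"
proof -
  have n: "n > 0" and m: "m \<ge> 1" and \<psi>: "\<psi> \<in> chB_pow n m k {\<phi>}"
    using assms(1,2,5) by auto
  note bdd = bdd_above_gap_offsets[OF n]
  have k: "int k \<in> gap_offsets n m H \<psi>"
    using chB_pow_mem_gap_offsets[OF n m assms(4) \<psi>] .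
  have "g \<le> gap n m H \<phi> + int k" if "g \<in> gap_offsets n m H \<psi>" for g
    using cSup_upper[OF gap_offsets_chB_pow_shift[OF n \<psi> that] bdd]
    by (simp add: gap_eq_Sup_gap_offsets)
  then have "gap n m H \<psi> \<le> gap n m H \<phi> + int k"
    unfolding gap_eq_Sup_gap_offsets[of n m H \<psi>] using k by (intro cSup_least) auto
  moreover have "int k \<le> gap n m H \<psi>"
    unfolding gap_eq_Sup_gap_offsets using cSup_upper[OF k bdd] .
  ultimately show ?thesis by simp
qed

end
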